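(* For integers $N\ge1$, $m,n$: $$\tau^{m,n}_N(t)=\prod_{k=1}^{N-1}\Big(\frac{q^{n+k-1}b_3}{q^{n+k-1}b_3-1}\Big)^{N-k}\det\big[\widetilde\Psi_{m,n}(t),\widetilde\Psi_{m,n}(qt),\dots,\widetilde\Psi_{m,n}(q^{N-1}t)\big]$$ $$=\prod_{k=1}^{N-1}\Big(\frac{q^{m-k+1}b_1}{q^{m-k+1}b_1-1}\Big)^{N-k}\det\big[\check\Psi_{m,n}(t),\check\Psi_{m,n+1}(t),\dots,\check\Psi_{m,n+N-1}(t)\big]$$ $$=(-1)^{N(N-1)/2}\prod_{k=1}^{N-1}(q^{n+k-1}b_3)^{N-k}\prod_{k=1}^{N-1}\Big(\frac{q^{m-k+1}b_1}{q^{m-k+1}b_1-1}\Big)^{N-k}\det\big[\widehat\Psi_{m,n}(t),\widehat\Psi_{m,n+1}(q^{-1}t),\dots,\widehat\Psi_{m,n+N-1}(q^{-N+1}t)\big].$$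
   Context: $q$ is a fixed nonzero complex constant (generic), $b_1,b_3$ generic parameters with $q^jb_1\neq1$, $q^jb_3\ne1$ for all integers $j$. $\psi(t,b_1,b_3)$ is a function of three variables satisfying, for all values of its arguments: (R1) $\psi(qt,b_1,b_3)=b_1\psi(t,b_1,b_3)+(1-b_1)\psi(qt,b_1/q,b_3)$, (R2) $b_3\psi(qt,b_1,b_3)=\psi(t,b_1,b_3)+(b_3-1)\psi(t,b_1,qb_3)$, (R3) $qtb_1b_3\psi(qt,b_1,b_3)=(qtb_1-1)\psi(t,b_1,b_3)+\psi(t,qb_1,b_3)$, (R4) $qt\psi(qt,b_1,b_3)=(qtb_1-1)\psi(t,b_1,b_3)+\psi(qt,b_1,b_3/q)$. $\tau^{m,n}_N(t)=\det\big(\psi(t,q^{m-j+1}b_1,q^{n+i-1}b_3)\big)_{i,j=1}^N$. Column vectors of height $N$: $\widetilde\Psi_{m,n}(t)$ has $i$-th entry $\psi(t,q^{m-i+1}b_1,q^nb_3)$; $\check\Psi_{m,n}(t)$ has $i$-th entry $\psi(q^{-i+1}t,q^mb_1,q^nb_3)$; $\widehat\Psi_{m,n}(t)$ has $i$-th entry $\psi(q^{i-1}t,q^mb_1,q^nb_3)$ ($i=1,\dots,N$). *)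

theory Defs
  imports Complex_Main "Jordan_Normal_Form.Determinant"
begin

text \<open>Matrices are indexed from 0 (Jordan_Normal_Form); the paper's index i (1..N)
  corresponds to the 0-based index i-1 here.  Integer powers of q are written with powi.\<close>

definition tau :: "(complex \<Rightarrow> complex \<Rightarrow> complex \<Rightarrow> complex) \<Rightarrow> complex \<Rightarrow> complex \<Rightarrow> complex
    \<Rightarrow> int \<Rightarrow> int \<Rightarrow> nat \<Rightarrow> complex \<Rightarrow> complex" where
  "tau psi q b1 b3 m n N t =
     det (mat N N (\<lambda>(i,j). psi t (q powi (m - int j) * b1) (q powi (n + int i) * b3)))"

definition PsiTilde :: "(complex \<Rightarrow> complex \<Rightarrow> complex \<Rightarrow> complex) \<Rightarrow> complex \<Rightarrow> complex \<Rightarrow> complex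
    \<Rightarrow> nat \<Rightarrow> int \<Rightarrow> int \<Rightarrow> complex \<Rightarrow> complex vec" where
  "PsiTilde psi q b1 b3 N m n t = vec N (\<lambda>i. psi t (q powi (m - int i) * b1) (q powi n * b3))"

definition PsiCheck :: "(complex \<Rightarrow> complex \<Rightarrow> complex \<Rightarrow> complex) \<Rightarrow> complex \<Rightarrow> complex \<Rightarrow> complex
    \<Rightarrow> nat \<Rightarrow> int \<Rightarrow> int \<Rightarrow> complex \<Rightarrow> complex vec" where
  "PsiCheck psi q b1 b3 N m n t = vec N (\<lambda>i. psi (q powi (- int i) * t) (q powi m * b1) (q powi n * b3))"

definition PsiHat :: "(complex \<Rightarrow> complex \<Rightarrow> complex \<Rightarrow> complex) \<Rightarrow> complex \<Rightarrow> complex \<Rightarrow> complex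
    \<Rightarrow> nat \<Rightarrow> int \<Rightarrow> int \<Rightarrow> complex \<Rightarrow> complex vec" where
  "PsiHat psi q b1 b3 N m n t = vec N (\<lambda>i. psi (q ^ i * t) (q powi m * b1) (q powi n * b3))"

end

theory Submission
  imports Defs
begin

text \<open>The contiguity relation R2, solved for the shifted parameter, writes \<open>\<psi>(s, c\<^sub>1, q c)\<close>
  as \<open>c/(c-1) \<psi>(q s, c\<^sub>1, c) - 1/(c-1) \<psi>(s, c\<^sub>1, c)\<close>; iterating, the \<open>j\<close>-th column
  \<open>\<psi>(t, \<dots>, q\<^sup>j c)\<close> is a combination of the columns \<open>\<psi>(q\<^sup>a t, \<dots>, c)\<close>, \<open>a \<le> j\<close>, with leading
  coefficient \<open>\<Prod>\<^sub>k<j c\<^sub>k/(c\<^sub>k-1)\<close>. Such an upper triangular column operation multiplies the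
  determinant by the product of its diagonal, which gives the first identity; R1 does the
  same in the \<open>b\<^sub>1\<close> direction and gives the second. For the third, the matrices of the
  \<open>\<Psi>\<close>-check and \<open>\<Psi>\<close>-hat vectors are both triangular transforms of the matrix
  \<open>\<psi>(q\<^sup>a\<^sup>-\<^sup>i t, q\<^sup>m b\<^sub>1, q\<^sup>n b\<^sub>3)\<close>, one with diagonal coefficients \<open>c/(c-1)\<close> and the other
  (after reversing the order of summation) with \<open>-1/(c-1)\<close>.\<close>

fun shift_coeff :: "(nat \<Rightarrow> 'a::comm_semiring_1) \<Rightarrow> (nat \<Rightarrow> 'a) \<Rightarrow> nat \<Rightarrow> nat \<Rightarrow> 'a" where
  "shift_coeff \<alpha> \<beta> 0 a = (if a = 0 then 1 else 0)"
| "shift_coeff \<alpha> \<beta> (Suc j) a =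
     \<alpha> j * (if a = 0 then 0 else shift_coeff \<alpha> \<beta> j (a - 1)) + \<beta> j * shift_coeff \<alpha> \<beta> j a"

lemma shift_coeff_eq_0: "j < a \<Longrightarrow> shift_coeff \<alpha> \<beta> j a = 0"
  by (induction j arbitrary: a) auto

lemma shift_coeff_diag: "shift_coeff \<alpha> \<beta> j j = (\<Prod>k<j. \<alpha> k)"
  by (induction j) (auto simp: shift_coeff_eq_0 mult.commute)

lemma shift_coeff_0: "shift_coeff \<alpha> \<beta> j 0 = (\<Prod>k<j. \<beta> k)"
  by (induction j) (auto simp: mult.commute)

lemma shift_recurrence_expansion:
  fixes X :: "nat \<Rightarrow> 'b \<Rightarrow> 'a::comm_semiring_1"
  assumes rec: "\<And>j s. X (Suc j) s = \<alpha> j * X j (\<sigma> s) + \<beta> j * X j s"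
  shows "X j s = (\<Sum>a\<le>j. shift_coeff \<alpha> \<beta> j a * X 0 ((\<sigma> ^^ a) s))"
proof (induction j arbitrary: s)
  case 0
  show ?case by simp
next
  case (Suc j)
  have shifted: "(\<Sum>a\<le>Suc j. (if a = 0 then 0 else shift_coeff \<alpha> \<beta> j (a - 1)) * X 0 ((\<sigma> ^^ a) s))
      = (\<Sum>a\<le>j. shift_coeff \<alpha> \<beta> j a * X 0 ((\<sigma> ^^ a) (\<sigma> s)))"
    by (subst sum.atMost_Suc_shift) (simp add: funpow_swap1)
  have unshifted: "(\<Sum>a\<le>Suc j. shift_coeff \<alpha> \<beta> j a * X 0 ((\<sigma> ^^ a) s))
      = (\<Sum>a\<le>j. shift_coeff \<alpha> \<beta> j a * X 0 ((\<sigma> ^^ a) s))"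
    by (simp add: shift_coeff_eq_0)
  have "(\<Sum>a\<le>Suc j. shift_coeff \<alpha> \<beta> (Suc j) a * X 0 ((\<sigma> ^^ a) s))
     = \<alpha> j * (\<Sum>a\<le>Suc j. (if a = 0 then 0 else shift_coeff \<alpha> \<beta> j (a - 1)) * X 0 ((\<sigma> ^^ a) s))
       + \<beta> j * (\<Sum>a\<le>Suc j. shift_coeff \<alpha> \<beta> j a * X 0 ((\<sigma> ^^ a) s))"
    by (simp add: sum_distrib_left sum.distrib algebra_simps)
  also have "\<dots> = X (Suc j) s"
    using shifted unshifted Suc rec by simp
  finally show ?case by simp
qed

lemma prod_triangle_eq_prod_power:
  "(\<Prod>j<N. \<Prod>k<j. f k) = (\<Prod>k=1..N-1. (f (k - 1) :: 'a::comm_monoid_mult) ^ (N - k))"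
proof (cases N)
  case 0
  then show ?thesis by simp
next
  case (Suc M)
  have "(\<Prod>j<N. \<Prod>k<j. f k) = (\<Prod>k<M. \<Prod>i\<in>{Suc k..M}. f k)"
    using Suc by (simp add: lessThan_Suc_atMost prod.nested_swap')
  also have "\<dots> = (\<Prod>k<M. f k ^ (M - k))"
    by simp
  also have "\<dots> = (\<Prod>k\<in>{Suc 0..<Suc M}. f (k - 1) ^ (Suc M - k))"
    by (simp only: prod.shift_bounds_Suc_ivl) (simp add: atLeast0LessThan)
  also have "{Suc 0..<Suc M} = {1..N-1}"
    using Suc by auto
  finally show ?thesis
    using Suc by simp
qed

lemma prod_triangle_neg_one: "(\<Prod>j<N. \<Prod>k<j. -1 :: 'a::comm_ring_1) = (-1) ^ (N * (N - 1) div 2)"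
proof -
  have "2 * (\<Sum>j<N. j) = N * (N - 1)"
    by (induction N) (auto simp: algebra_simps)
  then have "(\<Sum>j<N. j) = N * (N - 1) div 2"
    by linarith
  moreover have "(\<Prod>j<N. (-1 :: 'a) ^ j) = (-1) ^ (\<Sum>j<N. j)"
    by (rule power_sum[symmetric])
  ultimately show ?thesis
    by simp
qed

lemma mat_of_cols_map_vec:
  "mat_of_cols N (map (\<lambda>j. vec N (f j)) [0..<N]) = mat N N (\<lambda>(i, j). f j i)"
  by (auto simp: mat_of_cols_def)

lemma det_mat_swap:
  "det (mat N N (\<lambda>(i, j). f j i)) = det (mat N N (\<lambda>(i, j). f i j))"
proof -
  have "mat N N (\<lambda>(i, j). f j i) = transpose_mat (mat N N (\<lambda>(i, j). f i j))"
    by auto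
  then show ?thesis
    using det_transpose[of "mat N N (\<lambda>(i, j). f i j)" N] by simp
qed

text \<open>Adding to each column multiples of the preceding ones, then rescaling it, is
  right multiplication by an upper triangular matrix.\<close>
lemma det_mat_triangular_combination:
  fixes f g u :: "nat \<Rightarrow> nat \<Rightarrow> 'a::comm_ring_1"
  assumes "\<And>i j. i < N \<Longrightarrow> j < N \<Longrightarrow> f i j = (\<Sum>a\<le>j. u j a * g i a)"
  shows "det (mat N N (\<lambda>(i, j). f i j)) = det (mat N N (\<lambda>(i, j). g i j)) * (\<Prod>j<N. u j j)"
proof -
  define U where "U = mat N N (\<lambda>(a, j). if a \<le> j then u j a else 0)"
  have U: "U \<in> carrier_mat N N"
    by (simp add: U_def)
  have "mat N N (\<lambda>(i, j). f i j) = mat N N (\<lambda>(i, j). g i j) * U"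
  proof (rule eq_matI)
    fix i j
    assume "i < dim_row (mat N N (\<lambda>(i, j). g i j) * U)"
      and "j < dim_col (mat N N (\<lambda>(i, j). g i j) * U)"
    then have i: "i < N" and j: "j < N"
      using U by auto
    have "(mat N N (\<lambda>(i, j). g i j) * U) $$ (i, j)
        = (\<Sum>a<N. if a \<le> j then g i a * u j a else 0)"
      using i j U by (auto simp: scalar_prod_def U_def atLeast0LessThan intro: sum.cong)
    also have "\<dots> = (\<Sum>a\<in>{..<N} \<inter> {..j}. g i a * u j a)"
      by (simp add: sum.inter_restrict)
    also have "{..<N} \<inter> {..j} = {..j}"
      using j by auto
    finally show "mat N N (\<lambda>(i, j). f i j) $$ (i, j) = (mat N N (\<lambda>(i, j). g i j) * U) $$ (i, j)"
      using assms i j by (simp add: mult.commute)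
  qed (use U in auto)
  then have "det (mat N N (\<lambda>(i, j). f i j)) = det (mat N N (\<lambda>(i, j). g i j)) * det U"
    using U by (simp add: det_mult[of _ N])
  also have "det U = (\<Prod>j<N. u j j)"
    using U by (subst det_upper_triangular[of U N])
      (auto simp: U_def upper_triangular_def prod_list_diag_prod atLeast0LessThan intro: prod.cong)
  finally show ?thesis .
qed

lemma psi_expand_in_c3:
  fixes psi :: "'a \<Rightarrow> 'a \<Rightarrow> 'a \<Rightarrow> 'a::field" and c :: "nat \<Rightarrow> 'a"
  assumes R2: "\<And>s c1 c3. c3 * psi (q*s) c1 c3 = psi s c1 c3 + (c3 - 1) * psi s c1 (q*c3)"
    and c_Suc: "\<And>j. c (Suc j) = q * c j"
    and c_ne_1: "\<And>j. c j \<noteq> 1"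
  shows "psi s c1 (c j) =
    (\<Sum>a\<le>j. shift_coeff (\<lambda>j. c j / (c j - 1)) (\<lambda>j. - 1 / (c j - 1)) j a * psi (q ^ a * s) c1 (c 0))"
proof -
  have "psi s c1 (c (Suc j))
      = c j / (c j - 1) * psi (q * s) c1 (c j) + - 1 / (c j - 1) * psi s c1 (c j)" for j s
  proof -
    have "c j - 1 \<noteq> 0"
      using c_ne_1[of j] by simp
    with R2[of "c j" s c1]
    have "psi s c1 (c (Suc j)) = (c j * psi (q * s) c1 (c j) - psi s c1 (c j)) / (c j - 1)"
      by (simp add: c_Suc eq_divide_eq algebra_simps)
    then show ?thesis
      by (simp add: diff_divide_distrib)
  qed
  then have "psi s c1 (c j) = (\<Sum>a\<le>j. shift_coeff (\<lambda>j. c j / (c j - 1)) (\<lambda>j. - 1 / (c j - 1)) j a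
      * psi (((\<lambda>s. q * s) ^^ a) s) c1 (c 0))"
    by (rule shift_recurrence_expansion[where X = "\<lambda>j s. psi s c1 (c j)"])
  moreover have "((\<lambda>s. q * s) ^^ a) s = q ^ a * s" for a
    by (induction a) auto
  ultimately show ?thesis
    by simp
qed

lemma psi_expand_in_c1:
  fixes psi :: "'a \<Rightarrow> 'a \<Rightarrow> 'a \<Rightarrow> 'a::field" and d :: "nat \<Rightarrow> 'a"
  assumes q_nz: "q \<noteq> 0"
    and R1: "\<And>s c1 c3. psi (q*s) c1 c3 = c1 * psi s c1 c3 + (1 - c1) * psi (q*s) (c1/q) c3"
    and d_Suc: "\<And>i. d (Suc i) = d i / q"
    and d_ne_1: "\<And>i. d i \<noteq> 1"
  shows "psi s (d i) c3 =
    (\<Sum>a\<le>i. shift_coeff (\<lambda>i. d i / (d i - 1)) (\<lambda>i. 1 / (1 - d i)) i a * psi (s / q ^ a) (d 0) c3)"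
proof -
  have "psi s (d (Suc i)) c3
      = d i / (d i - 1) * psi (s / q) (d i) c3 + 1 / (1 - d i) * psi s (d i) c3" for i s
  proof -
    have "1 - d i \<noteq> 0"
      using d_ne_1[of i] by simp
    with R1[of "s / q" "d i" c3] q_nz
    have "psi s (d (Suc i)) c3 = (psi s (d i) c3 - d i * psi (s / q) (d i) c3) / (1 - d i)"
      by (simp add: d_Suc eq_divide_eq algebra_simps)
    also have "\<dots> = - d i / (1 - d i) * psi (s / q) (d i) c3 + 1 / (1 - d i) * psi s (d i) c3"
      by (simp add: diff_divide_distrib)
    also have "- d i / (1 - d i) = d i / (d i - 1)"
      by (metis minus_diff_eq minus_divide_divide)
    finally show ?thesis .
  qed
  then have "psi s (d i) c3 = (\<Sum>a\<le>i. shift_coeff (\<lambda>i. d i / (d i - 1)) (\<lambda>i. 1 / (1 - d i)) i a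
      * psi (((\<lambda>s. s / q) ^^ a) s) (d 0) c3)"
    by (rule shift_recurrence_expansion[where X = "\<lambda>i s. psi s (d i) c3"])
  moreover have "((\<lambda>s. s / q) ^^ a) s = s / q ^ a" for a
    by (induction a) auto
  ultimately show ?thesis
    by simp
qed

lemma tau_eq_det_PsiTilde:
  fixes psi :: "complex \<Rightarrow> complex \<Rightarrow> complex \<Rightarrow> complex"
  assumes q_nz: "q \<noteq> 0"
    and b3_gen: "\<And>j::int. q powi j * b3 \<noteq> 1"
    and R2: "\<And>s c1 c3. c3 * psi (q*s) c1 c3 = psi s c1 c3 + (c3 - 1) * psi s c1 (q*c3)"
  shows "tau psi q b1 b3 m n N t =
      (\<Prod>k=1..N-1. ((q powi (n + int k - 1) * b3) / (q powi (n + int k - 1) * b3 - 1)) ^ (N - k))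
      * det (mat_of_cols N (map (\<lambda>j. PsiTilde psi q b1 b3 N m n (q ^ j * t)) [0..<N]))"
proof -
  define c where "c j = q powi (n + int j) * b3" for j :: nat
  define d where "d i = q powi (m - int i) * b1" for i :: nat
  define \<alpha> where "\<alpha> = (\<lambda>j. c j / (c j - 1))"
  define \<beta> where "\<beta> = (\<lambda>j. - 1 / (c j - 1))"
  have c_Suc: "c (Suc j) = q * c j" for j
    using q_nz by (simp add: c_def power_int_add algebra_simps)
  have expand: "psi s c1 (c j) = (\<Sum>a\<le>j. shift_coeff \<alpha> \<beta> j a * psi (q ^ a * s) c1 (c 0))" for s c1 j
    unfolding \<alpha>_def \<beta>_def using R2 c_Suc by (rule psi_expand_in_c3) (simp add: c_def b3_gen)
  have columns: "mat N N (\<lambda>(i, a). psi (q ^ a * t) (d i) (c 0))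
      = mat_of_cols N (map (\<lambda>j. PsiTilde psi q b1 b3 N m n (q ^ j * t)) [0..<N])"
    by (simp add: PsiTilde_def mat_of_cols_map_vec c_def d_def)
  have coeffs: "(\<Prod>j<N. shift_coeff \<alpha> \<beta> j j)
      = (\<Prod>k=1..N-1. ((q powi (n + int k - 1) * b3) / (q powi (n + int k - 1) * b3 - 1)) ^ (N - k))"
    unfolding shift_coeff_diag prod_triangle_eq_prod_power
    by (intro prod.cong refl) (auto simp: \<alpha>_def c_def of_nat_diff add_diff_eq)
  have "tau psi q b1 b3 m n N t = det (mat N N (\<lambda>(i, j). psi t (d i) (c j)))"
    using det_mat_swap[of N "\<lambda>i j. psi t (d i) (c j)"] by (simp add: tau_def c_def d_def)
  also have "\<dots> = det (mat N N (\<lambda>(i, a). psi (q ^ a * t) (d i) (c 0)))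
      * (\<Prod>j<N. shift_coeff \<alpha> \<beta> j j)"
  proof (rule det_mat_triangular_combination[where u = "shift_coeff \<alpha> \<beta>"])
    fix i j assume "i < N" "j < N"
    show "psi t (d i) (c j) = (\<Sum>a\<le>j. shift_coeff \<alpha> \<beta> j a * psi (q ^ a * t) (d i) (c 0))"
      by (rule expand)
  qed
  finally show ?thesis
    unfolding columns coeffs by (simp only: mult.commute)
qed

lemma tau_eq_det_PsiCheck:
  fixes psi :: "complex \<Rightarrow> complex \<Rightarrow> complex \<Rightarrow> complex"
  assumes q_nz: "q \<noteq> 0"
    and b1_gen: "\<And>j::int. q powi j * b1 \<noteq> 1"
    and R1: "\<And>s c1 c3. psi (q*s) c1 c3 = c1 * psi s c1 c3 + (1 - c1) * psi (q*s) (c1/q) c3"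
  shows "tau psi q b1 b3 m n N t =
      (\<Prod>k=1..N-1. ((q powi (m - int k + 1) * b1) / (q powi (m - int k + 1) * b1 - 1)) ^ (N - k))
      * det (mat_of_cols N (map (\<lambda>j. PsiCheck psi q b1 b3 N m (n + int j) t) [0..<N]))"
proof -
  define c where "c j = q powi (n + int j) * b3" for j :: nat
  define d where "d i = q powi (m - int i) * b1" for i :: nat
  define \<alpha> where "\<alpha> = (\<lambda>i. d i / (d i - 1))"
  define \<beta> where "\<beta> = (\<lambda>i. 1 / (1 - d i))"
  have d_Suc: "d (Suc i) = d i / q" for i
    using q_nz power_int_diff[of q "m - int i" 1] by (simp add: d_def algebra_simps)
  have expand: "psi s (d i) c3 = (\<Sum>a\<le>i. shift_coeff \<alpha> \<beta> i a * psi (q powi (- int a) * s) (d 0) c3)"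
    for s c3 i
  proof -
    have "d i \<noteq> 1" for i
      by (simp add: d_def b1_gen)
    then have "psi s (d i) c3 = (\<Sum>a\<le>i. shift_coeff \<alpha> \<beta> i a * psi (s / q ^ a) (d 0) c3)"
      unfolding \<alpha>_def \<beta>_def
      by (rule psi_expand_in_c1[where psi = psi and d = d, OF q_nz R1 d_Suc])
    moreover have "q powi (- int a) * s = s / q ^ a" for a
      by (simp add: power_int_minus field_simps)
    ultimately show ?thesis
      by simp
  qed
  have columns: "det (mat N N (\<lambda>(i, a). psi (q powi (- int a) * t) (d 0) (c i)))
      = det (mat_of_cols N (map (\<lambda>j. PsiCheck psi q b1 b3 N m (n + int j) t) [0..<N]))"
    using det_mat_swap[of N "\<lambda>i a. psi (q powi (- int a) * t) (d 0) (c i)"]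
    by (simp add: PsiCheck_def mat_of_cols_map_vec c_def d_def)
  have coeffs: "(\<Prod>j<N. shift_coeff \<alpha> \<beta> j j)
      = (\<Prod>k=1..N-1. ((q powi (m - int k + 1) * b1) / (q powi (m - int k + 1) * b1 - 1)) ^ (N - k))"
    unfolding shift_coeff_diag prod_triangle_eq_prod_power
    by (intro prod.cong refl) (auto simp: \<alpha>_def d_def of_nat_diff diff_diff_eq2 diff_add_eq)
  have "tau psi q b1 b3 m n N t = det (mat N N (\<lambda>(i, j). psi t (d j) (c i)))"
    by (simp add: tau_def c_def d_def)
  also have "\<dots> = det (mat N N (\<lambda>(i, a). psi (q powi (- int a) * t) (d 0) (c i)))
      * (\<Prod>j<N. shift_coeff \<alpha> \<beta> j j)"
  proof (rule det_mat_triangular_combination[where u = "shift_coeff \<alpha> \<beta>"])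
    fix i j assume "i < N" "j < N"
    show "psi t (d j) (c i)
        = (\<Sum>a\<le>j. shift_coeff \<alpha> \<beta> j a * psi (q powi (- int a) * t) (d 0) (c i))"
      by (rule expand)
  qed
  finally show ?thesis
    unfolding columns coeffs by (simp only: mult.commute)
qed

lemma det_PsiCheck_eq_det_PsiHat:
  fixes psi :: "complex \<Rightarrow> complex \<Rightarrow> complex \<Rightarrow> complex"
  assumes q_nz: "q \<noteq> 0"
    and b3_gen: "\<And>j::int. q powi j * b3 \<noteq> 1"
    and R2: "\<And>s c1 c3. c3 * psi (q*s) c1 c3 = psi s c1 c3 + (c3 - 1) * psi s c1 (q*c3)"
  shows "det (mat_of_cols N (map (\<lambda>j. PsiCheck psi q b1 b3 N m (n + int j) t) [0..<N])) =
      (-1) ^ (N * (N - 1) div 2) * (\<Prod>k=1..N-1. (q powi (n + int k - 1) * b3) ^ (N - k))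
      * det (mat_of_cols N
          (map (\<lambda>j. PsiHat psi q b1 b3 N m (n + int j) (q powi (- int j) * t)) [0..<N]))"
proof -
  define c where "c j = q powi (n + int j) * b3" for j :: nat
  define \<alpha> where "\<alpha> = (\<lambda>j. c j / (c j - 1))"
  define \<beta> where "\<beta> = (\<lambda>j. - 1 / (c j - 1))"
  define e where "e = q powi m * b1"
  define F where "F i a = psi (q powi (int a - int i) * t) e (c 0)" for i a :: nat
  have c_Suc: "c (Suc j) = q * c j" for j
    using q_nz by (simp add: c_def power_int_add algebra_simps)
  have expand: "psi s c1 (c j) = (\<Sum>a\<le>j. shift_coeff \<alpha> \<beta> j a * psi (q ^ a * s) c1 (c 0))" for s c1 j
    unfolding \<alpha>_def \<beta>_def using R2 c_Suc by (rule psi_expand_in_c3) (simp add: c_def b3_gen)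
  have shift_time: "q ^ a * (q powi k * t) = q powi (int a + k) * t" for a k
    using q_nz by (simp add: power_int_add flip: power_int_of_nat)
  have "det (mat_of_cols N (map (\<lambda>j. PsiCheck psi q b1 b3 N m (n + int j) t) [0..<N]))
      = det (mat N N (\<lambda>(i, j). psi (q powi (- int i) * t) e (c j)))"
    by (simp add: PsiCheck_def mat_of_cols_map_vec c_def e_def)
  also have "\<dots> = det (mat N N (\<lambda>(i, a). F i a)) * (\<Prod>j<N. shift_coeff \<alpha> \<beta> j j)"
  proof (rule det_mat_triangular_combination[where u = "shift_coeff \<alpha> \<beta>"])
    fix i j assume "i < N" "j < N"
    show "psi (q powi (- int i) * t) e (c j) = (\<Sum>a\<le>j. shift_coeff \<alpha> \<beta> j a * F i a)"
      unfolding expand[of "q powi (- int i) * t" e j] shift_time F_def by simp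
  qed
  finally have check: "det (mat_of_cols N (map (\<lambda>j. PsiCheck psi q b1 b3 N m (n + int j) t) [0..<N]))
      = det (mat N N (\<lambda>(i, a). F i a)) * (\<Prod>j<N. shift_coeff \<alpha> \<beta> j j)" .
  have "det (mat_of_cols N
      (map (\<lambda>j. PsiHat psi q b1 b3 N m (n + int j) (q powi (- int j) * t)) [0..<N]))
      = det (mat N N (\<lambda>(i, j). psi (q ^ i * (q powi (- int j) * t)) e (c j)))"
    by (simp add: PsiHat_def mat_of_cols_map_vec c_def e_def)
  also have "\<dots> = det (mat N N (\<lambda>(i, r). F r i)) * (\<Prod>j<N. shift_coeff \<alpha> \<beta> j (j - j))"
  proof (rule det_mat_triangular_combination[where u = "\<lambda>j r. shift_coeff \<alpha> \<beta> j (j - r)"])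
    fix i j assume "i < N" "j < N"
    have "psi (q ^ i * (q powi (- int j) * t)) e (c j)
        = (\<Sum>a\<le>j. shift_coeff \<alpha> \<beta> j a * psi (q powi (int a + int i - int j) * t) e (c 0))"
      unfolding expand[of "q ^ i * (q powi (- int j) * t)" e j] by (simp add: shift_time add_diff_eq)
    also have "\<dots> = (\<Sum>r\<le>j. shift_coeff \<alpha> \<beta> j (j - r) * F r i)"
      by (rule sum.reindex_bij_witness[where i = "\<lambda>r. j - r" and j = "\<lambda>a. j - a"])
        (auto simp: F_def of_nat_diff algebra_simps)
    finally show "psi (q ^ i * (q powi (- int j) * t)) e (c j)
        = (\<Sum>r\<le>j. shift_coeff \<alpha> \<beta> j (j - r) * F r i)" .
  qed
  finally have hat: "det (mat_of_cols N
      (map (\<lambda>j. PsiHat psi q b1 b3 N m (n + int j) (q powi (- int j) * t)) [0..<N]))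
      = det (mat N N (\<lambda>(i, a). F i a)) * (\<Prod>j<N. \<Prod>k<j. \<beta> k)"
    using det_mat_swap[of N F] by (simp add: shift_coeff_0)
  have "(\<Prod>j<N. shift_coeff \<alpha> \<beta> j j) = (\<Prod>j<N. \<Prod>k<j. -1 * c k * \<beta> k)"
    unfolding shift_coeff_diag \<alpha>_def \<beta>_def by simp
  also have "\<dots> = (\<Prod>j<N. \<Prod>k<j. -1) * (\<Prod>j<N. \<Prod>k<j. c k) * (\<Prod>j<N. \<Prod>k<j. \<beta> k)"
    by (simp only: prod.distrib)
  also have "\<dots> = (-1) ^ (N * (N - 1) div 2) * (\<Prod>k=1..N-1. (q powi (n + int k - 1) * b3) ^ (N - k))
      * (\<Prod>j<N. \<Prod>k<j. \<beta> k)"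
    unfolding prod_triangle_neg_one prod_triangle_eq_prod_power
    by (auto simp: c_def of_nat_diff add_diff_eq intro!: prod.cong)
  finally show ?thesis
    unfolding check hat by (simp only: ac_simps)
qed

theorem lemmaA1:
  fixes psi :: "complex \<Rightarrow> complex \<Rightarrow> complex \<Rightarrow> complex"
    and q b1 b3 :: complex and m n :: int and N :: nat and t :: complex
  assumes q_nz: "q \<noteq> 0"
    and b1_gen: "\<And>j::int. q powi j * b1 \<noteq> 1"
    and b3_gen: "\<And>j::int. q powi j * b3 \<noteq> 1"
    and R1: "\<And>s c1 c3. psi (q*s) c1 c3 = c1 * psi s c1 c3 + (1 - c1) * psi (q*s) (c1/q) c3"
    and R2: "\<And>s c1 c3. c3 * psi (q*s) c1 c3 = psi s c1 c3 + (c3 - 1) * psi s c1 (q*c3)"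
    and R3: "\<And>s c1 c3. q*s*c1*c3 * psi (q*s) c1 c3 = (q*s*c1 - 1) * psi s c1 c3 + psi s (q*c1) c3"
    and R4: "\<And>s c1 c3. q*s * psi (q*s) c1 c3 = (q*s*c1 - 1) * psi s c1 c3 + psi (q*s) c1 (c3/q)"
    and N_pos: "N \<ge> 1"
  shows
   "tau psi q b1 b3 m n N t =
      (\<Prod>k=1..N-1. ((q powi (n + int k - 1) * b3) / (q powi (n + int k - 1) * b3 - 1)) ^ (N - k))
      * det (mat_of_cols N (map (\<lambda>j. PsiTilde psi q b1 b3 N m n (q ^ j * t)) [0..<N]))
  \<and> tau psi q b1 b3 m n N t =
      (\<Prod>k=1..N-1. ((q powi (m - int k + 1) * b1) / (q powi (m - int k + 1) * b1 - 1)) ^ (N - k))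
      * det (mat_of_cols N (map (\<lambda>j. PsiCheck psi q b1 b3 N m (n + int j) t) [0..<N]))
  \<and> tau psi q b1 b3 m n N t =
      (-1) ^ (N * (N - 1) div 2)
      * (\<Prod>k=1..N-1. (q powi (n + int k - 1) * b3) ^ (N - k))
      * (\<Prod>k=1..N-1. ((q powi (m - int k + 1) * b1) / (q powi (m - int k + 1) * b1 - 1)) ^ (N - k))
      * det (mat_of_cols N (map (\<lambda>j. PsiHat psi q b1 b3 N m (n + int j) (q powi (- int j) * t)) [0..<N]))"
proof -
  note tilde = tau_eq_det_PsiTilde[where psi = psi and q = q, OF q_nz b3_gen R2]
  note check = tau_eq_det_PsiCheck[where psi = psi and q = q, OF q_nz b1_gen R1]
  note hat = det_PsiCheck_eq_det_PsiHat[where psi = psi and q = q, OF q_nz b3_gen R2]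
  show ?thesis
    by (intro conjI tilde check) (simp only: check hat ac_simps)
qed

end
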